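(* Under the hypotheses of Theorem 2 (namely: $(x_n)$ real with discrepancy $D_N$, $M_N=\max_{n\le N}nD_n$, $g$ positive monotonically decreasing with $g(N)/D_N\to\infty$, $Ng(N)\to\infty$ and $g\!\left(N\left(1+\frac{M_N}{Ng(N)}\right)\right)/g(N)\to1$), with $z_n$ independent and uniform on $[-g(n),g(n)]$, fix $s>0$ and define for $x\in\mathbb{R}$ $$h_{s,N}(x)=\sum_{n=1}^N\mathbb{P}\big(\|x_n+z_n-x\|<s/N\big).$$ Then $h_{s,N}(x)\to 2s$ as $N\to\infty$, uniformly in $x$.
   Context: $\|y\|$ denotes the distance from $y$ to the nearest integer. The discrepancy of $(x_n)$ is $D_N=\sup_{0\le a\le b\le 1}\left|\frac{\#\{n\le N:\{x_n\}\in[a,b]\}}{N}-(b-a)\right|$, where $\{x\}$ is the fractional part. *)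

theory Defs
  imports "HOL-Probability.Probability"
begin

definition dist_int :: "real \<Rightarrow> real" where
  "dist_int y = (INF k::int. \<bar>y - of_int k\<bar>)"

definition discrepancy :: "(nat \<Rightarrow> real) \<Rightarrow> nat \<Rightarrow> real" where
  "discrepancy x N = Sup {\<bar>real (card {n \<in> {1..N}. frac (x n) \<in> {a..b}}) / real N - (b - a)\<bar>
                          | a b. 0 \<le> a \<and> a \<le> b \<and> b \<le> 1}"

definition maxdisc :: "(nat \<Rightarrow> real) \<Rightarrow> nat \<Rightarrow> real" where
  "maxdisc x N = Max {real n * discrepancy x n | n. 1 \<le> n \<and> n \<le> N}"

definition hfun :: "(nat \<Rightarrow> real) \<Rightarrow> (real \<Rightarrow> real) \<Rightarrow> real \<Rightarrow> nat \<Rightarrow> real \<Rightarrow> real" where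
  "hfun x g s N y = (\<Sum>n = 1..N.
      measure (uniform_measure lborel {- g (real n) .. g (real n)})
              {z. dist_int (x n + z - y) < s / real N})"

end

theory Submission
  imports Defs
begin

text \<open>Write d = s/N. The event that x n + z n lies within d of y modulo 1 has probability
  equal to the integral over |u| < d of the density of x n + z n modulo 1 at y + u, and this
  density is the number of integers within g n of x n - y - u, divided by 2 g n. So it suffices
  that the densities summed over n \<le> N equal N + o(N), uniformly in the point.

  For a constant width b the number of integers within b of x n - w exceeds \<lfloor>2b\<rfloor> exactly when
  frac (x n) falls into two intervals of total length frac (2b), so the sum over n \<le> K is
  2bK up to an error 2K D_K. To handle the varying width, [1, N] is cut into blocks on which g
  varies by a factor at most 1 + \<epsilon> and which are long compared with the errors n D_n / g n
  at their endpoints. Blocks that are long enough exist because g (N + M_N / g N) / g N \<rightarrow> 1,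
  and g N / D_N \<rightarrow> \<infinity> makes the errors o(N).\<close>

section \<open>Discrepancy\<close>

lemma discrepancy_bdd_above:
  "bdd_above {\<bar>real (card {n \<in> {1..N}. frac (x n) \<in> {a..b}}) / real N - (b - a)\<bar>
                | a b. 0 \<le> a \<and> a \<le> b \<and> b \<le> 1}"
proof (rule bdd_aboveI[of _ 2], clarify)
  fix a b :: real assume ab: "0 \<le> a" "a \<le> b" "b \<le> 1"
  have "card {n \<in> {1..N}. frac (x n) \<in> {a..b}} \<le> card {1..N}"
    by (rule card_mono) auto
  then have "real (card {n \<in> {1..N}. frac (x n) \<in> {a..b}}) / real N \<le> 1"
    by (cases "N = 0") (auto simp: divide_le_eq)
  moreover have "0 \<le> real (card {n \<in> {1..N}. frac (x n) \<in> {a..b}}) / real N" by simp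
  ultimately show "\<bar>real (card {n \<in> {1..N}. frac (x n) \<in> {a..b}}) / real N - (b - a)\<bar> \<le> 2"
    using ab by linarith
qed

lemma discrepancy_ge:
  assumes "0 \<le> a" "a \<le> b" "b \<le> 1"
  shows "\<bar>real (card {n \<in> {1..N}. frac (x n) \<in> {a..b}}) / real N - (b - a)\<bar> \<le> discrepancy x N"
  unfolding discrepancy_def by (rule cSup_upper[OF _ discrepancy_bdd_above]) (use assms in blast)

lemma discrepancy_nonneg: "0 \<le> discrepancy x N"
  using order_trans[OF abs_ge_zero discrepancy_ge[of 0 0 N x]] by simp

lemma one_le_discrepancy_one: "1 \<le> discrepancy x 1"
proof -
  have "{n \<in> {1..1::nat}. frac (x n) \<in> {frac (x 1)..frac (x 1)}} = {1}" by auto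
  then show ?thesis
    using discrepancy_ge[of "frac (x 1)" "frac (x 1)" 1 x] by (simp add: less_imp_le[OF frac_lt_1])
qed

lemma card_frac_in_interval_error:
  assumes "0 \<le> a" "a \<le> b" "b \<le> 1"
  shows "\<bar>real (card {n \<in> {1..N}. frac (x n) \<in> {a..b}}) - real N * (b - a)\<bar> \<le> real N * discrepancy x N"
proof (cases "N = 0")
  case False
  then have "\<bar>real (card {n \<in> {1..N}. frac (x n) \<in> {a..b}}) - real N * (b - a)\<bar>
      = real N * \<bar>real (card {n \<in> {1..N}. frac (x n) \<in> {a..b}}) / real N - (b - a)\<bar>"
    by (simp add: abs_mult[symmetric] field_simps)
  also have "\<dots> \<le> real N * discrepancy x N"
    using discrepancy_ge[OF assms] by (intro mult_left_mono) auto
  finally show ?thesis .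
qed simp

lemma maxdisc_ge: "1 \<le> n \<Longrightarrow> n \<le> N \<Longrightarrow> real n * discrepancy x n \<le> maxdisc x N"
  unfolding maxdisc_def by (rule Max_ge) (auto simp: setcompr_eq_image)

lemma maxdisc_mono: "1 \<le> N \<Longrightarrow> N \<le> N' \<Longrightarrow> maxdisc x N \<le> maxdisc x N'"
  unfolding maxdisc_def by (rule Max_mono) (auto simp: setcompr_eq_image)

lemma one_le_maxdisc: "1 \<le> N \<Longrightarrow> 1 \<le> maxdisc x N"
  using maxdisc_ge[of 1 N x] one_le_discrepancy_one[of x] by simp

section \<open>Integers near a point\<close>

definition near_ints_count :: "real \<Rightarrow> real \<Rightarrow> nat" where
  "near_ints_count t b = card {k::int. \<bar>t - of_int k\<bar> \<le> b}"

lemma near_ints_eq_interval: "{k::int. \<bar>t - of_int k\<bar> \<le> b} = {\<lceil>t - b\<rceil>..\<lfloor>t + b\<rfloor>}"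
  by (auto simp: abs_le_iff ceiling_le_iff le_floor_iff)

lemma near_ints_count_eq: "near_ints_count t b = nat (\<lfloor>t + b\<rfloor> - \<lceil>t - b\<rceil> + 1)"
  unfolding near_ints_count_def near_ints_eq_interval by simp

lemma near_ints_count_mono: "b \<le> b' \<Longrightarrow> near_ints_count t b \<le> near_ints_count t b'"
  unfolding near_ints_count_def
  by (rule card_mono) (auto simp: near_ints_eq_interval intro: ceiling_mono floor_mono)

lemma near_ints_count_formula:
  assumes "0 \<le> b"
  shows "real (near_ints_count t b) = of_int \<lfloor>2*b\<rfloor> + (if frac (b - t) \<le> frac (2*b) then 1 else 0)"
proof -
  define f where "f = frac (b - t)"
  define r where "r = frac (2*b)"
  have f: "0 \<le> f" "f < 1" and r: "0 \<le> r" "r < 1"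
    unfolding f_def r_def by (auto simp: frac_lt_1)
  have ceil: "of_int \<lceil>t - b\<rceil> = t - b + f"
    unfolding f_def frac_def ceiling_def by simp
  have "t + b = of_int \<lceil>t - b\<rceil> + (r - f) + of_int \<lfloor>2*b\<rfloor>"
    using ceil unfolding r_def frac_def by simp
  then have "\<lfloor>t + b\<rfloor> = \<lceil>t - b\<rceil> + \<lfloor>2*b\<rfloor> + (if f \<le> r then 0 else -1)"
    using r f by (intro floor_unique) auto
  moreover have "0 \<le> \<lfloor>2*b\<rfloor>" using assms by simp
  ultimately show ?thesis
    unfolding near_ints_count_eq f_def[symmetric] r_def[symmetric] by auto
qed

lemma near_ints_count_le:
  assumes "0 \<le> b"
  shows "real (near_ints_count t b) \<le> 2*b + 1"
proof -
  have "real (near_ints_count t b) \<le> of_int \<lfloor>2*b\<rfloor> + 1"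
    using near_ints_count_formula[OF assms, of t] by (simp split: if_splits)
  then show ?thesis using of_int_floor_le[of "2*b"] by linarith
qed

lemma frac_diff_le_iff:
  assumes "0 \<le> r" "r < 1"
  shows "frac (c - y) \<le> r \<longleftrightarrow>
     frac y \<in> {max 0 (frac c - r)..frac c} \<or> frac y \<in> {min 1 (frac c + 1 - r)..1}"
proof (cases "frac y \<le> frac c")
  case True
  then show ?thesis using frac_diff_pos[OF True] assms frac_lt_1[of y] by auto
next
  case False
  then show ?thesis using frac_diff_neg[of c y] assms frac_lt_1[of y] by auto
qed

lemma sum_near_ints_count_error:
  assumes "0 \<le> b"
  shows "\<bar>(\<Sum>n=1..K. real (near_ints_count (x n - w) b)) - 2*b*real K\<bar> \<le> 2 * real K * discrepancy x K"
proof -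
  define e where "e = frac (b + w)"
  define r where "r = frac (2*b)"
  have r: "0 \<le> r" "r < 1" and e: "0 \<le> e" "e < 1"
    unfolding r_def e_def by (auto simp: frac_lt_1)
  define A1 where "A1 = {n \<in> {1..K}. frac (x n) \<in> {max 0 (e - r)..e}}"
  define A2 where "A2 = {n \<in> {1..K}. frac (x n) \<in> {min 1 (e + 1 - r)..1}}"
  have in_A: "frac (b - (x n - w)) \<le> r \<longleftrightarrow> n \<in> A1 \<union> A2" if "n \<in> {1..K}" for n
    using that frac_diff_le_iff[OF r, of "b + w" "x n"] unfolding A1_def A2_def e_def
    by (simp add: algebra_simps)
  have disjoint: "A1 \<inter> A2 = {}"
  proof (rule ccontr)
    assume "A1 \<inter> A2 \<noteq> {}"
    then obtain n where "frac (x n) \<le> e" "min 1 (e + 1 - r) \<le> frac (x n)"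
      unfolding A1_def A2_def by auto
    then show False using r frac_lt_1[of "x n"] by (auto simp: min_def split: if_splits)
  qed
  have "(\<Sum>n=1..K. real (near_ints_count (x n - w) b))
       = (\<Sum>n=1..K. of_int \<lfloor>2*b\<rfloor> + (if n \<in> A1 \<union> A2 then 1 else 0))"
    using in_A by (intro sum.cong refl) (auto simp: near_ints_count_formula[OF assms] r_def)
  also have "\<dots> = real K * of_int \<lfloor>2*b\<rfloor> + real (card (A1 \<union> A2))"
  proof -
    have "{1..K} \<inter> {n. n \<in> A1 \<union> A2} = A1 \<union> A2" unfolding A1_def A2_def by auto
    then show ?thesis unfolding sum.distrib by (simp add: sum.If_cases)
  qed
  also have "card (A1 \<union> A2) = card A1 + card A2"
    using disjoint by (intro card_Un_disjoint) (auto simp: A1_def A2_def)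
  finally have sum_eq: "(\<Sum>n=1..K. real (near_ints_count (x n - w) b))
        = real K * of_int \<lfloor>2*b\<rfloor> + real (card A1) + real (card A2)"
    by simp
  have "\<bar>real (card A1) - real K * (e - max 0 (e - r))\<bar> \<le> real K * discrepancy x K"
    unfolding A1_def by (rule card_frac_in_interval_error) (use r e in auto)
  moreover have "\<bar>real (card A2) - real K * (1 - min 1 (e + 1 - r))\<bar> \<le> real K * discrepancy x K"
    unfolding A2_def by (rule card_frac_in_interval_error) (use r e in auto)
  moreover have "2*b*real K = real K * of_int \<lfloor>2*b\<rfloor> + real K * (e - max 0 (e - r))
                   + real K * (1 - min 1 (e + 1 - r))"
  proof -
    have "(e - max 0 (e - r)) + (1 - min 1 (e + 1 - r)) = r" by auto
    then have "real K * r = real K * (e - max 0 (e - r)) + real K * (1 - min 1 (e + 1 - r))"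
      by (metis distrib_left)
    moreover have "2*b*real K = real K * of_int \<lfloor>2*b\<rfloor> + real K * r"
      unfolding r_def frac_def by (simp add: algebra_simps)
    ultimately show ?thesis by linarith
  qed
  ultimately show ?thesis using sum_eq by linarith
qed

lemma sum_split_at:
  fixes f :: "nat \<Rightarrow> 'a::comm_monoid_add"
  assumes "m \<le> Suc K" "K \<le> K'"
  shows "(\<Sum>n=m..K'. f n) = (\<Sum>n=m..K. f n) + (\<Sum>n=Suc K..K'. f n)"
  using sum.ub_add_nat[of m K f "K' - K"] assms by simp

lemma block_sum_near_ints_count_error:
  assumes "0 \<le> b" "K \<le> K'"
  shows "\<bar>(\<Sum>n=Suc K..K'. real (near_ints_count (x n - w) b)) - 2*b*(real K' - real K)\<bar>
           \<le> 2 * real K * discrepancy x K + 2 * real K' * discrepancy x K'"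
  using sum_near_ints_count_error[OF assms(1), where x=x and w=w and K=K]
    sum_near_ints_count_error[OF assms(1), where x=x and w=w and K=K']
    sum_split_at[where f="\<lambda>n. real (near_ints_count (x n - w) b)" and m=1 and K=K and K'=K'] assms(2)
  by (simp add: algebra_simps abs_le_iff)

section \<open>The probabilities as integrals\<close>

lemma dist_int_less_iff: "dist_int v < d \<longleftrightarrow> (\<exists>k::int. \<bar>v - of_int k\<bar> < d)"
proof -
  have "bdd_below (range (\<lambda>k::int. \<bar>v - of_int k\<bar>))" by (rule bdd_belowI[of _ 0]) auto
  then show ?thesis unfolding dist_int_def by (simp add: cInf_less_iff)
qed

lemma integrable_indicator_near_ints_count:
  assumes "0 \<le> a"
  shows "integrable lborel (\<lambda>u. indicator {-d<..<d} u * real (near_ints_count (t - u) a))"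
proof (rule Bochner_Integration.integrable_bound[where f="\<lambda>u. (2 * a + 1) * indicator {-d<..<d} u"])
  show "integrable lborel (\<lambda>u. (2 * a + 1) * indicator {-d<..<d} u :: real)"
  proof (intro integrable_mult_right integrable_real_indicator)
    have "emeasure lborel {-d<..<d} \<le> emeasure lborel {-\<bar>d\<bar>..\<bar>d\<bar>}" by (rule emeasure_mono) auto
    then show "emeasure lborel {-d<..<d} < \<infinity>" by (simp add: order_le_less_trans)
  qed simp
  show "(\<lambda>u. indicator {-d<..<d} u * real (near_ints_count (t - u) a)) \<in> borel_measurable lborel"
    unfolding near_ints_count_eq by measurable
  show "AE u in lborel. norm (indicator {-d<..<d} u * real (near_ints_count (t - u) a))
          \<le> norm ((2 * a + 1) * indicator {-d<..<d} u :: real)"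
    using near_ints_count_le[OF assms] assms by (auto simp: indicator_def)
qed

lemma borel_translate: "A \<in> sets borel \<Longrightarrow> (+) c -` A \<in> sets (borel :: real measure)"
  using measurable_sets[of "(+) c" borel borel A] by simp

lemma emeasure_lborel_translate:
  assumes "A \<in> sets borel"
  shows "emeasure lborel ((+) c -` A) = emeasure lborel (A :: real set)"
  using emeasure_distr[of "(+) c" lborel borel A] lborel_distr_plus[of c] assms by simp

lemma near_int_in_range:
  fixes t u a :: real
  assumes "\<bar>t - u - of_int k\<bar> \<le> a" "\<bar>u\<bar> \<le> 1"
  shows "k \<in> {-\<lceil>\<bar>t\<bar> + a + 1\<rceil>..\<lceil>\<bar>t\<bar> + a + 1\<rceil>}"
proof -
  define R where "R = \<lceil>\<bar>t\<bar> + a + 1\<rceil>"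
  have "\<bar>real_of_int k\<bar> \<le> real_of_int R"
    using assms le_of_int_ceiling[of "\<bar>t\<bar> + a + 1"] unfolding R_def by linarith
  then show ?thesis unfolding R_def[symmetric] by (simp add: abs_le_iff)
qed

lemma sum_indicator_near_ints:
  fixes t u a :: real
  assumes "d \<le> 1"
  shows "(\<Sum>k\<in>{-\<lceil>\<bar>t\<bar> + a + 1\<rceil>..\<lceil>\<bar>t\<bar> + a + 1\<rceil>}. indicator {u. \<bar>u\<bar> < d \<and> \<bar>t - u - of_int k\<bar> \<le> a} u)
           = indicator {-d<..<d} u * real (near_ints_count (t - u) a)"
proof (cases "\<bar>u\<bar> < d")
  case True
  then have "{-\<lceil>\<bar>t\<bar> + a + 1\<rceil>..\<lceil>\<bar>t\<bar> + a + 1\<rceil>} \<inter> {k. \<bar>t - u - of_int k\<bar> \<le> a}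
               = {k. \<bar>t - u - of_int k\<bar> \<le> a}"
    using near_int_in_range[of t u _ a] assms by auto
  then show ?thesis
    using True unfolding near_ints_count_def by (simp add: indicator_def sum.If_cases abs_less_iff)
qed (auto simp: indicator_def)

text \<open>Each z with dist_int (t + z) < d \<le> 1/2 has a unique nearest integer k; translating by
  t - k and summing over k turns the measure into an integral of lattice point counts.\<close>
lemma measure_uniform_near_int:
  assumes a: "0 < a" and d: "0 < d" "d \<le> 1/2"
  shows "measure (uniform_measure lborel {-a..a}) {z. dist_int (t + z) < d}
           = (\<integral>u. indicator {-d<..<d} u * real (near_ints_count (t - u) a) \<partial>lborel) / (2*a)"
proof -
  define R where "R = \<lceil>\<bar>t\<bar> + a + 1\<rceil>"
  define T where "T k = {u. \<bar>u\<bar> < d \<and> \<bar>t - u - of_int k\<bar> \<le> a}" for k :: int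
  have T_borel: "T k \<in> sets borel" for k unfolding T_def by measurable
  have T_finite: "emeasure lborel (T k) < \<infinity>" for k
  proof -
    have "emeasure lborel (T k) \<le> emeasure lborel {-d..d}" by (rule emeasure_mono) (auto simp: T_def)
    also have "\<dots> < \<infinity>" using d by simp
    finally show ?thesis .
  qed
  have in_range: "k \<in> {-R..R}" if "\<bar>t - u - of_int k\<bar> \<le> a" "\<bar>u\<bar> \<le> 1" for k u
    using near_int_in_range[OF that] unfolding R_def .
  have near_set: "{-a..a} \<inter> {z. dist_int (t + z) < d} = (\<Union>k\<in>{-R..R}. (+) (t - of_int k) -` T k)"
  proof (intro equalityI subsetI)
    fix z assume "z \<in> {-a..a} \<inter> {z. dist_int (t + z) < d}"
    then obtain k :: int where "\<bar>t + z - of_int k\<bar> < d" "\<bar>z\<bar> \<le> a"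
      by (auto simp: dist_int_less_iff)
    moreover from this have "k \<in> {-R..R}"
      using in_range[of "t + z - of_int k" k] d by auto
    ultimately show "z \<in> (\<Union>k\<in>{-R..R}. (+) (t - of_int k) -` T k)"
      by (auto simp: T_def algebra_simps)
  qed (auto simp: T_def dist_int_less_iff algebra_simps)
  have "disjoint_family_on (\<lambda>k. (+) (t - of_int k) -` T k) {-R..R}"
    unfolding disjoint_family_on_def
  proof (intro ballI impI)
    fix k l :: int assume "k \<noteq> l"
    then have "1 \<le> \<bar>k - l\<bar>" by linarith
    then have "1 \<le> \<bar>real_of_int k - of_int l\<bar>" by (metis of_int_1_le_iff of_int_abs of_int_diff)
    then show "(+) (t - of_int k) -` T k \<inter> (+) (t - of_int l) -` T l = {}"
      using d by (auto simp: T_def)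
  qed
  then have "measure lborel ({-a..a} \<inter> {z. dist_int (t + z) < d})
               = (\<Sum>k\<in>{-R..R}. measure lborel ((+) (t - of_int k) -` T k))"
    unfolding near_set using T_borel T_finite
    by (intro measure_finite_Union)
       (auto simp: less_top[symmetric] borel_translate emeasure_lborel_translate)
  also have "\<dots> = (\<Sum>k\<in>{-R..R}. \<integral>u. indicator (T k) u \<partial>lborel)"
    using T_borel by (simp add: measure_def emeasure_lborel_translate)
  also have "\<dots> = (\<integral>u. (\<Sum>k\<in>{-R..R}. indicator (T k) u) \<partial>lborel)"
    using T_borel T_finite by (subst Bochner_Integration.integral_sum) auto
  also have "\<dots> = (\<integral>u. indicator {-d<..<d} u * real (near_ints_count (t - u) a) \<partial>lborel)"
    unfolding T_def R_def using sum_indicator_near_ints d by simp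
  finally have "measure lborel ({-a..a} \<inter> {z. dist_int (t + z) < d})
      = (\<integral>u. indicator {-d<..<d} u * real (near_ints_count (t - u) a) \<partial>lborel)" .
  moreover have "{z. dist_int (t + z) < d} \<in> sets borel"
    unfolding dist_int_less_iff by measurable
  ultimately show ?thesis
    using a by (subst measure_uniform_measure) auto
qed

lemma integral_indicator_approx:
  fixes F :: "real \<Rightarrow> real"
  assumes "0 \<le> d" and int: "integrable lborel (\<lambda>u. indicator {-d<..<d} u * F u)"
    and close: "\<And>u. \<bar>F u - c\<bar> \<le> \<delta>"
  shows "\<bar>(\<integral>u. indicator {-d<..<d} u * F u \<partial>lborel) - 2 * d * c\<bar> \<le> 2 * d * \<delta>"
proof -
  have int_ind: "integrable lborel (\<lambda>u. indicator {-d<..<d} u * r :: real)" for r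
    using assms(1) by (intro integrable_mult_left integrable_real_indicator) auto
  have "(\<integral>u. indicator {-d<..<d} u * F u \<partial>lborel) - 2 * d * c
          = (\<integral>u. indicator {-d<..<d} u * (F u - c) \<partial>lborel)"
    using int int_ind[of c] assms(1) by (simp add: right_diff_distrib)
  also have "\<bar>\<dots>\<bar> \<le> (\<integral>u. indicator {-d<..<d} u * \<delta> \<partial>lborel)"
  proof -
    have "\<bar>\<integral>u. indicator {-d<..<d} u * (F u - c) \<partial>lborel\<bar>
            \<le> (\<integral>u. \<bar>indicator {-d<..<d} u * (F u - c)\<bar> \<partial>lborel)"
      using integral_norm_bound[of lborel "\<lambda>u. indicator {-d<..<d} u * (F u - c)"] by simp
    also have "\<dots> \<le> (\<integral>u. indicator {-d<..<d} u * \<delta> \<partial>lborel)"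
      using int int_ind close
      by (intro integral_mono) (auto simp: right_diff_distrib indicator_def)
    finally show ?thesis .
  qed
  also have "\<dots> = 2 * d * \<delta>" using assms(1) by simp
  finally show ?thesis .
qed

section \<open>Blocks of nearly constant width\<close>

locale decreasing_width =
  fixes x :: "nat \<Rightarrow> real" and g :: "real \<Rightarrow> real"
  assumes g_pos: "\<And>t. 1 \<le> t \<Longrightarrow> 0 < g t"
    and g_decr: "\<And>t u. 1 \<le> t \<Longrightarrow> t \<le> u \<Longrightarrow> g u \<le> g t"
begin

text \<open>The density at w of the distribution of x n + z n modulo 1, for z n uniform on [-g n, g n].\<close>
definition wrapped_density :: "nat \<Rightarrow> real \<Rightarrow> real" where
  "wrapped_density n w = real (near_ints_count (x n - w) (g (real n))) / (2 * g (real n))"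

definition disc_error :: "nat \<Rightarrow> real" where
  "disc_error K = real K * discrepancy x K / g (real K)"

lemma disc_error_nonneg: "1 \<le> K \<Longrightarrow> 0 \<le> disc_error K"
  unfolding disc_error_def using discrepancy_nonneg[of x K] g_pos[of K] by simp

lemma wrapped_density_bounds:
  assumes "1 \<le> n"
  shows "0 \<le> wrapped_density n w" "wrapped_density n w \<le> (2 * g n + 1) / (2 * g n)"
proof -
  have "0 < g n" using g_pos assms by simp
  then show "0 \<le> wrapped_density n w" "wrapped_density n w \<le> (2 * g n + 1) / (2 * g n)"
    unfolding wrapped_density_def using near_ints_count_le[of "g n" "x n - w"]
    by (auto intro: divide_right_mono)
qed

lemma block_sum_density_le:
  assumes "1 \<le> K" "K \<le> K'"
  shows "(\<Sum>n=Suc K..K'. wrapped_density n w)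
           \<le> g K / g K' * (real K' - real K + disc_error K) + disc_error K'"
proof -
  have gK': "0 < g K'" and gK: "0 < g K" using g_pos assms by auto
  have "(\<Sum>n=Suc K..K'. wrapped_density n w)
          \<le> (\<Sum>n=Suc K..K'. real (near_ints_count (x n - w) (g K)) / (2 * g K'))"
  proof (rule sum_mono)
    fix n assume n: "n \<in> {Suc K..K'}"
    then have "g K' \<le> g n" "g n \<le> g K" "0 < g n" using assms by (auto intro!: g_decr g_pos)
    then show "wrapped_density n w \<le> real (near_ints_count (x n - w) (g K)) / (2 * g K')"
      unfolding wrapped_density_def using near_ints_count_mono[of "g n" "g K"] gK'
      by (intro frac_le) auto
  qed
  also have "\<dots> \<le> (2 * g K * (real K' - real K)
                    + 2 * real K * discrepancy x K + 2 * real K' * discrepancy x K') / (2 * g K')"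
    unfolding sum_divide_distrib[symmetric]
    using block_sum_near_ints_count_error[of "g K" K K' x w] gK assms gK'
    by (intro divide_right_mono) auto
  also have "\<dots> = g K / g K' * (real K' - real K + disc_error K) + disc_error K'"
    using gK gK' unfolding disc_error_def by (simp add: field_simps)
  finally show ?thesis .
qed

lemma block_sum_density_ge:
  assumes "1 \<le> K" "K \<le> K'"
  shows "g K' / g K * (real K' - real K - disc_error K') - disc_error K
           \<le> (\<Sum>n=Suc K..K'. wrapped_density n w)"
proof -
  have gK': "0 < g K'" and gK: "0 < g K" using g_pos assms by auto
  have "g K' / g K * (real K' - real K - disc_error K') - disc_error K
      = (2 * g K' * (real K' - real K)
          - (2 * real K * discrepancy x K + 2 * real K' * discrepancy x K')) / (2 * g K)"
    using gK gK' unfolding disc_error_def by (simp add: field_simps)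
  also have "\<dots> \<le> (\<Sum>n=Suc K..K'. real (near_ints_count (x n - w) (g K')) / (2 * g K))"
    unfolding sum_divide_distrib[symmetric]
    using block_sum_near_ints_count_error[of "g K'" K K' x w] gK assms gK'
    by (intro divide_right_mono) auto
  also have "\<dots> \<le> (\<Sum>n=Suc K..K'. wrapped_density n w)"
  proof (rule sum_mono)
    fix n assume n: "n \<in> {Suc K..K'}"
    then have "g K' \<le> g n" "g n \<le> g K" "0 < g n" using assms by (auto intro!: g_decr g_pos)
    then show "real (near_ints_count (x n - w) (g K')) / (2 * g K) \<le> wrapped_density n w"
      unfolding wrapped_density_def using near_ints_count_mono[of "g K'" "g n"] gK'
      by (intro frac_le) auto
  qed
  finally show ?thesis .
qed

lemma block_sum_density_error:
  assumes "1 \<le> K" "K \<le> K'" "0 \<le> \<epsilon>" "\<epsilon> \<le> 1" "g K \<le> (1 + \<epsilon>) * g K'"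
  shows "\<bar>(\<Sum>n=Suc K..K'. wrapped_density n w) - (real K' - real K)\<bar>
           \<le> \<epsilon> * (real K' - real K) + (1 + \<epsilon>) * disc_error K + disc_error K'"
proof -
  have gK': "0 < g K'" and gK: "0 < g K" using g_pos assms by auto
  have "g K' \<le> g K" using assms by (intro g_decr) auto
  have err: "0 \<le> disc_error K" "0 \<le> disc_error K'" using assms by (auto intro: disc_error_nonneg)
  have len: "0 \<le> real K' - real K" using assms by simp
  have up: "g K / g K' \<le> 1 + \<epsilon>" using assms gK' by (simp add: divide_le_eq)
  have low: "1 - \<epsilon> \<le> g K' / g K" "g K' / g K \<le> 1"
  proof -
    have "(1 - \<epsilon>) * g K \<le> (1 - \<epsilon>) * ((1 + \<epsilon>) * g K')"
      using assms by (intro mult_left_mono) auto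
    also have "\<dots> = (1 - \<epsilon>*\<epsilon>) * g K'" by (simp add: algebra_simps)
    also have "\<dots> \<le> g K'" using gK' assms by (simp add: mult_le_cancel_right1)
    finally show "1 - \<epsilon> \<le> g K' / g K" using gK by (simp add: le_divide_eq)
    show "g K' / g K \<le> 1" using \<open>g K' \<le> g K\<close> gK by simp
  qed
  have "g K / g K' * (real K' - real K + disc_error K) \<le> (1 + \<epsilon>) * (real K' - real K + disc_error K)"
    using up len err by (intro mult_right_mono) auto
  with block_sum_density_le[OF assms(1,2), of w]
  have "(\<Sum>n=Suc K..K'. wrapped_density n w)
          \<le> (1 + \<epsilon>) * (real K' - real K) + (1 + \<epsilon>) * disc_error K + disc_error K'"
    by (simp add: algebra_simps)
  moreover have "(1 - \<epsilon>) * (real K' - real K) - disc_error K' \<le> g K' / g K * (real K' - real K - disc_error K')"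
    using mult_right_mono[OF low(1) len] mult_right_mono[OF low(2) err(2)]
      right_diff_distrib[of "g K' / g K" "real K' - real K" "disc_error K'"]
    by linarith
  with block_sum_density_ge[OF assms(1,2), of w]
  have "(1 - \<epsilon>) * (real K' - real K) - disc_error K' - disc_error K
          \<le> (\<Sum>n=Suc K..K'. wrapped_density n w)"
    by linarith
  moreover have "0 \<le> \<epsilon> * disc_error K" using err assms(3) by simp
  ultimately show ?thesis unfolding abs_le_iff by (simp add: algebra_simps)
qed

lemma integrable_indicator_density:
  assumes "1 \<le> n"
  shows "integrable lborel (\<lambda>u. indicator {-d<..<d} u * wrapped_density n (y + u))"
proof -
  have "0 \<le> g n" using g_pos[of n] assms by simp
  from integrable_divide[OF integrable_indicator_near_ints_count[OF this, of d "x n - y"], of "2 * g n"]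
  show ?thesis unfolding wrapped_density_def by (simp add: algebra_simps)
qed

lemma integrable_indicator_sum_density:
  "integrable lborel (\<lambda>u. indicator {-d<..<d} u * (\<Sum>n=1..N. wrapped_density n (y + u)))"
  unfolding sum_distrib_left using integrable_indicator_density
  by (intro Bochner_Integration.integrable_sum) auto

lemma hfun_eq_integral:
  assumes "1 \<le> N" "0 < s" "s / real N \<le> 1/2"
  shows "hfun x g s N y
           = (\<integral>u. indicator {-(s / real N)<..<s / real N} u * (\<Sum>n=1..N. wrapped_density n (y + u)) \<partial>lborel)"
proof -
  define d where "d = s / real N"
  have d: "0 < d" "d \<le> 1/2" using assms unfolding d_def by auto
  have "hfun x g s N y = (\<Sum>n=1..N. \<integral>u. indicator {-d<..<d} u * wrapped_density n (y + u) \<partial>lborel)"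
    unfolding hfun_def d_def[symmetric]
  proof (rule sum.cong[OF refl])
    fix n assume "n \<in> {1..N}"
    then have gn: "0 < g n" by (intro g_pos) simp
    have "measure (uniform_measure lborel {- g n..g n}) {z. dist_int (x n + z - y) < d}
            = (\<integral>u. indicator {-d<..<d} u * real (near_ints_count (x n - y - u) (g n)) \<partial>lborel) / (2 * g n)"
      using measure_uniform_near_int[OF gn d, of "x n - y"] by (simp add: algebra_simps)
    also have "\<dots> = (\<integral>u. indicator {-d<..<d} u * wrapped_density n (y + u) \<partial>lborel)"
      unfolding wrapped_density_def by (simp add: algebra_simps)
    finally show "measure (uniform_measure lborel {- g n..g n}) {z. dist_int (x n + z - y) < d}
            = (\<integral>u. indicator {-d<..<d} u * wrapped_density n (y + u) \<partial>lborel)" .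
  qed
  also have "\<dots> = (\<integral>u. indicator {-d<..<d} u * (\<Sum>n=1..N. wrapped_density n (y + u)) \<partial>lborel)"
    unfolding sum_distrib_left using integrable_indicator_density
    by (subst Bochner_Integration.integral_sum) auto
  finally show ?thesis unfolding d_def .
qed

lemma g_ratio_squeeze:
  assumes lim: "(\<lambda>K. g (c K) / g (a K)) \<longlonglongrightarrow> 1"
    and ev: "eventually (\<lambda>K. 1 \<le> a K \<and> a K \<le> b K \<and> b K \<le> c K) sequentially"
  shows "(\<lambda>K. g (b K) / g (a K)) \<longlonglongrightarrow> 1"
proof (rule real_tendsto_sandwich[OF _ _ lim tendsto_const])
  show "eventually (\<lambda>K. g (c K) / g (a K) \<le> g (b K) / g (a K)) sequentially"
    using ev by eventually_elim (auto intro!: divide_right_mono g_decr less_imp_le[OF g_pos])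
  show "eventually (\<lambda>K. g (b K) / g (a K) \<le> 1) sequentially"
    using ev by eventually_elim (simp add: g_decr g_pos)
qed

lemma eventually_g_le_if_bounded_below:
  assumes "0 < c" "\<And>t. 1 \<le> t \<Longrightarrow> c \<le> g t" "0 < \<epsilon>"
  shows "eventually (\<lambda>K. \<forall>t\<ge>1. g (real K) \<le> (1 + \<epsilon>) * g t) sequentially"
proof -
  define L where "L = Inf (g ` {1..})"
  have bdd: "bdd_below (g ` {1..})" using assms(2) by (intro bdd_belowI2[where m=c]) auto
  have "c \<le> L" unfolding L_def using assms(2) by (intro cInf_greatest) auto
  then have "L < (1 + \<epsilon>) * L" using assms by simp
  then obtain t0 where t0: "1 \<le> t0" "g t0 < (1 + \<epsilon>) * L"
    using cInf_less_iff[OF _ bdd] unfolding L_def by auto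
  show ?thesis using eventually_ge_at_top[of "nat \<lceil>t0\<rceil>"]
  proof eventually_elim
    case (elim K)
    show ?case
    proof (intro allI impI)
      fix t :: real assume "1 \<le> t"
      have "g K \<le> g t0" using elim t0 by (intro g_decr) linarith+
      also have "\<dots> \<le> (1 + \<epsilon>) * L" using t0 by simp
      also have "\<dots> \<le> (1 + \<epsilon>) * g t"
        unfolding L_def using \<open>1 \<le> t\<close> assms(3) bdd by (intro mult_left_mono cInf_lower) auto
      finally show "g K \<le> (1 + \<epsilon>) * g t" .
    qed
  qed
qed

end

text \<open>E sends the start K of a block to its end, which is the start of the next block.\<close>
locale block_chain = decreasing_width +
  fixes \<epsilon> :: real and K0 :: nat and E :: "nat \<Rightarrow> nat"
  assumes eps: "0 < \<epsilon>" "\<epsilon> \<le> 1"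
    and K0: "1 \<le> K0"
    and E_gt: "\<And>K. K0 \<le> K \<Longrightarrow> K < E K"
    and g_E: "\<And>K. K0 \<le> K \<Longrightarrow> g K \<le> (1 + \<epsilon>) * g (E K)"
    and disc_error_le_block: "\<And>K. K0 \<le> K \<Longrightarrow> disc_error K \<le> \<epsilon> * (real (E K) - real K) / 2"
    and disc_error_le: "\<And>K. K0 \<le> K \<Longrightarrow> disc_error K \<le> \<epsilon> * real K / 2"
begin

lemma partial_block_error:
  assumes "K0 \<le> K" "K \<le> N" "N \<le> E K"
    and start: "\<bar>(\<Sum>n=Suc K0..K. wrapped_density n w) - (real K - real K0)\<bar>
                  \<le> 3 * \<epsilon> * (real K - real K0) + disc_error K"
  shows "\<bar>(\<Sum>n=Suc K0..N. wrapped_density n w) - (real N - real K0)\<bar>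
           \<le> 3 * \<epsilon> * (real K - real K0) + \<epsilon> * (real N - real K) + (2 + \<epsilon>) * disc_error K + disc_error N"
proof -
  have "g (E K) \<le> g N" using assms K0 by (intro g_decr) auto
  then have "(1 + \<epsilon>) * g (E K) \<le> (1 + \<epsilon>) * g N" using eps by (intro mult_left_mono) auto
  then have "g K \<le> (1 + \<epsilon>) * g N" using g_E[OF assms(1)] by linarith
  then have "\<bar>(\<Sum>n=Suc K..N. wrapped_density n w) - (real N - real K)\<bar>
               \<le> \<epsilon> * (real N - real K) + (1 + \<epsilon>) * disc_error K + disc_error N"
    using block_sum_density_error[of K N \<epsilon>] assms K0 eps by auto
  moreover have "(\<Sum>n=Suc K0..N. wrapped_density n w)
                   = (\<Sum>n=Suc K0..K. wrapped_density n w) + (\<Sum>n=Suc K..N. wrapped_density n w)"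
    using assms by (intro sum_split_at) auto
  ultimately show ?thesis using start by (simp add: abs_le_iff algebra_simps)
qed

lemma exists_chain_block_containing:
  assumes "K0 \<le> N"
  shows "\<exists>K. K0 \<le> K \<and> K \<le> N \<and> N < E K \<and>
           \<bar>(\<Sum>n=Suc K0..K. wrapped_density n w) - (real K - real K0)\<bar>
              \<le> 3 * \<epsilon> * (real K - real K0) + disc_error K"
  using assms
proof (induction N rule: dec_induct)
  case base
  then show ?case using E_gt[of K0] disc_error_nonneg[of K0] K0 by auto
next
  case (step N)
  then obtain K where K: "K0 \<le> K" "K \<le> N" "N < E K"
    and start: "\<bar>(\<Sum>n=Suc K0..K. wrapped_density n w) - (real K - real K0)\<bar>
                  \<le> 3 * \<epsilon> * (real K - real K0) + disc_error K"
    by blast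
  show ?case
  proof (cases "Suc N < E K")
    case True
    then show ?thesis using K start by auto
  next
    case False
    then have EK: "E K = Suc N" using K by simp
    have "(2 + \<epsilon>) * disc_error K \<le> (2 + \<epsilon>) * (\<epsilon> * (real (E K) - real K) / 2)"
      using disc_error_le_block[OF K(1)] eps by (intro mult_left_mono) auto
    also have "\<dots> \<le> 4 * (\<epsilon> * (real (E K) - real K) / 2)"
      using eps E_gt[OF K(1)] by (intro mult_right_mono) auto
    also have "\<dots> = 2 * \<epsilon> * (real (E K) - real K)" by simp
    finally have "(2 + \<epsilon>) * disc_error K \<le> 2 * \<epsilon> * (real (E K) - real K)" .
    with partial_block_error[of K "E K", OF K(1) _ order.refl start] K
    have "\<bar>(\<Sum>n=Suc K0..E K. wrapped_density n w) - (real (E K) - real K0)\<bar>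
            \<le> 3 * \<epsilon> * (real (E K) - real K0) + disc_error (E K)"
      by (simp add: algebra_simps)
    then show ?thesis using EK E_gt[of "Suc N"] step.hyps by (intro exI[of _ "Suc N"]) auto
  qed
qed

lemma sum_density_tail_error:
  assumes "K0 \<le> N"
  shows "\<bar>(\<Sum>n=Suc K0..N. wrapped_density n w) - (real N - real K0)\<bar> \<le> 6 * \<epsilon> * real N"
proof -
  obtain K where K: "K0 \<le> K" "K \<le> N" "N < E K"
    and start: "\<bar>(\<Sum>n=Suc K0..K. wrapped_density n w) - (real K - real K0)\<bar>
                  \<le> 3 * \<epsilon> * (real K - real K0) + disc_error K"
    using exists_chain_block_containing[OF assms] by blast
  have "(2 + \<epsilon>) * disc_error K \<le> (2 + \<epsilon>) * (\<epsilon> * real K / 2)"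
    using disc_error_le[OF K(1)] eps by (intro mult_left_mono) auto
  also have "\<dots> \<le> 3 * (\<epsilon> * real N / 2)"
    using eps K(2) by (intro mult_mono) auto
  finally have "(2 + \<epsilon>) * disc_error K \<le> 3 * (\<epsilon> * real N / 2)" .
  moreover have "disc_error N \<le> \<epsilon> * real N / 2" using disc_error_le assms by simp
  moreover have "\<epsilon> * real K \<le> \<epsilon> * real N" using K(2) eps by simp
  moreover have "0 \<le> \<epsilon> * real K0" using eps by simp
  ultimately show ?thesis
    using partial_block_error[OF K(1,2) less_imp_le[OF K(3)] start] by (simp add: algebra_simps)
qed

lemma sum_density_uniform_error:
  "\<exists>N0. \<forall>N\<ge>N0. \<forall>w. \<bar>(\<Sum>n=1..N. wrapped_density n w) - real N\<bar> \<le> 7 * \<epsilon> * real N"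
proof -
  define C where "C = (\<Sum>n=1..K0. (2 * g n + 1) / (2 * g n)) + real K0"
  show ?thesis
  proof (intro exI[of _ "max K0 (nat \<lceil>C / \<epsilon>\<rceil>)"] allI impI)
    fix N w assume N: "max K0 (nat \<lceil>C / \<epsilon>\<rceil>) \<le> N"
    then have "C / \<epsilon> \<le> real N" by linarith
    then have CN: "C \<le> \<epsilon> * real N" using eps by (simp add: divide_le_eq mult.commute)
    have "0 \<le> (\<Sum>n=1..K0. wrapped_density n w)"
      using wrapped_density_bounds by (intro sum_nonneg) auto
    moreover have "(\<Sum>n=1..K0. wrapped_density n w) \<le> (\<Sum>n=1..K0. (2 * g n + 1) / (2 * g n))"
      using wrapped_density_bounds by (intro sum_mono) auto
    moreover have "(\<Sum>n=1..N. wrapped_density n w)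
                     = (\<Sum>n=1..K0. wrapped_density n w) + (\<Sum>n=Suc K0..N. wrapped_density n w)"
      using N by (intro sum_split_at) auto
    ultimately show "\<bar>(\<Sum>n=1..N. wrapped_density n w) - real N\<bar> \<le> 7 * \<epsilon> * real N"
      using sum_density_tail_error[of N w] N CN unfolding C_def abs_le_iff by auto
  qed
qed

end

section \<open>Existence of long blocks\<close>

locale admissible_width = decreasing_width +
  assumes g_disc: "filterlim (\<lambda>N. g (real N) / discrepancy x N) at_top sequentially"
    and g_ratio: "(\<lambda>N. g (real N * (1 + maxdisc x N / (real N * g (real N)))) / g (real N))
                    \<longlonglongrightarrow> 1"
begin

definition width_shift :: "nat \<Rightarrow> real" where
  "width_shift N = maxdisc x N / g (real N)"

lemma width_shift_pos: "1 \<le> N \<Longrightarrow> 0 < width_shift N"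
  unfolding width_shift_def using one_le_maxdisc[of N x] g_pos[of N] by simp

lemma width_shift_mono:
  assumes "1 \<le> N" "N \<le> N'"
  shows "width_shift N \<le> width_shift N'"
proof -
  have "0 < g N'" "g N' \<le> g N" using assms by (auto intro: g_pos g_decr)
  moreover have "maxdisc x N \<le> maxdisc x N'" "1 \<le> maxdisc x N"
    using maxdisc_mono[OF assms] one_le_maxdisc assms by auto
  ultimately have "maxdisc x N / g N \<le> maxdisc x N / g N'"
    by (intro divide_left_mono) auto
  also have "\<dots> \<le> maxdisc x N' / g N'"
    using \<open>0 < g N'\<close> \<open>maxdisc x N \<le> maxdisc x N'\<close> by (intro divide_right_mono) auto
  finally show ?thesis unfolding width_shift_def .
qed

lemma disc_error_le_width_shift: "1 \<le> K \<Longrightarrow> disc_error K \<le> width_shift K"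
  unfolding disc_error_def width_shift_def
  using maxdisc_ge[of K K x] g_pos[of K] by (intro divide_right_mono) auto

lemma tendsto_g_width_shift: "(\<lambda>N. g (real N + width_shift N) / g (real N)) \<longlonglongrightarrow> 1"
proof -
  have "eventually (\<lambda>N. g (real N * (1 + maxdisc x N / (real N * g (real N)))) / g (real N)
          = g (real N + width_shift N) / g (real N)) sequentially"
    using eventually_ge_at_top[of "1::nat"]
  proof eventually_elim
    case (elim N)
    then have "real N * (1 + maxdisc x N / (real N * g (real N))) = real N + width_shift N"
      using g_pos[of N] unfolding width_shift_def by (simp add: field_simps)
    then show ?case by simp
  qed
  from tendsto_cong[OF this] g_ratio show ?thesis by simp
qed

text \<open>Subtracting 1 from the shift absorbs the rounding of the intermediate point down to an integer.\<close>
lemma tendsto_g_multiple_width_shift: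
  "(\<lambda>K. g (real K + real r * max 0 (width_shift K - 1)) / g (real K)) \<longlonglongrightarrow> 1"
proof (induction r)
  case 0
  show ?case
    using eventually_ge_at_top[of "1::nat"]
    by (intro tendsto_eventually, eventually_elim) (simp add: g_pos less_imp_neq[symmetric])
next
  case (Suc r)
  define s where "s K = max 0 (width_shift K - 1)" for K
  define K' where "K' K = nat \<lfloor>real K + real r * s K\<rfloor>" for K
  have s: "0 \<le> s K" for K unfolding s_def by simp
  have K'_ge: "K \<le> K' K" for K
    unfolding K'_def using s[of K] by (simp add: le_nat_iff le_floor_iff)
  have K'_le: "real (K' K) \<le> real K + real r * s K" for K
    unfolding K'_def using s[of K] by simp
  have K'_gt: "real K + real r * s K - 1 < real (K' K)" for K
    unfolding K'_def using s[of K] by linarith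
  have "filterlim K' sequentially sequentially"
    by (rule filterlim_at_top_mono[OF filterlim_ident]) (use K'_ge in auto)
  from filterlim_compose[OF tendsto_g_width_shift this]
  have "(\<lambda>K. g (real (K' K) + width_shift (K' K)) / g (real (K' K))) \<longlonglongrightarrow> 1" by (simp add: o_def)
  then have to_K': "(\<lambda>K. g (real K + real (Suc r) * s K) / g (real (K' K))) \<longlonglongrightarrow> 1"
  proof (rule g_ratio_squeeze)
    show "eventually (\<lambda>K. 1 \<le> real (K' K) \<and> real (K' K) \<le> real K + real (Suc r) * s K \<and>
            real K + real (Suc r) * s K \<le> real (K' K) + width_shift (K' K)) sequentially"
      using eventually_ge_at_top[of "1::nat"]
    proof eventually_elim
      case (elim K)
      have "width_shift K \<le> width_shift (K' K)" using width_shift_mono[OF elim K'_ge] .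
      moreover have "0 < width_shift (K' K)" using width_shift_pos K'_ge[of K] elim by simp
      ultimately have "real K + real (Suc r) * s K \<le> real (K' K) + width_shift (K' K)"
        using K'_gt[of K] K'_ge[of K] unfolding s_def by (auto simp: algebra_simps max_def)
      then show ?case using K'_ge[of K] K'_le[of K] s[of K] elim by (auto simp: algebra_simps)
    qed
  qed
  have from_K': "(\<lambda>K. g (real (K' K)) / g (real K)) \<longlonglongrightarrow> 1"
    using Suc.IH unfolding s_def[symmetric]
  proof (rule g_ratio_squeeze)
    show "eventually (\<lambda>K. 1 \<le> real K \<and> real K \<le> real (K' K) \<and>
            real (K' K) \<le> real K + real r * s K) sequentially"
      using eventually_ge_at_top[of "1::nat"] by eventually_elim (use K'_ge K'_le in auto)
  qed
  have "eventually (\<lambda>K. g (real K + real (Suc r) * s K) / g (real (K' K)) * (g (real (K' K)) / g (real K))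
          = g (real K + real (Suc r) * s K) / g (real K)) sequentially"
    using eventually_ge_at_top[of "1::nat"]
  proof eventually_elim
    case (elim K)
    then have "0 < g (real (K' K))" using K'_ge[of K] by (intro g_pos) simp
    then show ?case by simp
  qed
  from tendsto_cong[OF this] tendsto_mult[OF to_K' from_K']
  show ?case unfolding s_def by simp
qed

definition block_end :: "real \<Rightarrow> nat \<Rightarrow> nat" where
  "block_end \<epsilon> K = K + nat \<lceil>2 * disc_error K / \<epsilon>\<rceil> + 1"

lemma eventually_disc_error_le:
  assumes "0 < \<epsilon>"
  shows "eventually (\<lambda>K. disc_error K \<le> \<epsilon> * real K / 2) sequentially"
proof -
  have "eventually (\<lambda>K. 2 / \<epsilon> \<le> g (real K) / discrepancy x K) sequentially"
    using g_disc by (simp add: filterlim_at_top)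
  then show ?thesis using eventually_ge_at_top[of "1::nat"]
  proof eventually_elim
    case (elim K)
    have gK: "0 < g K" using g_pos elim by simp
    have "discrepancy x K \<noteq> 0" using elim assms by auto
    then have "0 < discrepancy x K" using discrepancy_nonneg[of x K] by simp
    then have "discrepancy x K \<le> \<epsilon> * g K / 2"
      using elim assms by (simp add: le_divide_eq field_simps)
    then have "real K * discrepancy x K \<le> real K * (\<epsilon> * g K / 2)" by (intro mult_left_mono) auto
    then show ?case unfolding disc_error_def using gK by (simp add: divide_le_eq field_simps)
  qed
qed

text \<open>If g stays bounded away from 0 the claim is immediate. Otherwise the shift is eventually
  at least 2, so the block length, at most a constant multiple of the shift, is covered by r
  reduced shifts.\<close>
lemma eventually_g_le_g_block_end:
  assumes "0 < \<epsilon>"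
  shows "eventually (\<lambda>K. g K \<le> (1 + \<epsilon>) * g (block_end \<epsilon> K)) sequentially"
proof (cases "\<exists>c>0. \<forall>t\<ge>1. c \<le> g t")
  case True
  then obtain c where c: "0 < c" "\<And>t. 1 \<le> t \<Longrightarrow> c \<le> g t" by blast
  show ?thesis using eventually_g_le_if_bounded_below[OF c assms]
    by (rule eventually_mono) (auto simp: block_end_def)
next
  case False
  then obtain t1 where t1: "1 \<le> t1" "g t1 < 1/2"
    by (metis less_eq_real_def not_le zero_less_divide_1_iff zero_less_numeral)
  define r :: nat where "r = nat \<lceil>4 / \<epsilon>\<rceil> + 4"
  have r: "4 / \<epsilon> + 4 \<le> real r" unfolding r_def by linarith
  have "1 / (1 + \<epsilon>) < 1" using assms by simp
  from order_tendstoD(1)[OF tendsto_g_multiple_width_shift[of r] this]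
  show ?thesis using eventually_ge_at_top[of "nat \<lceil>t1\<rceil>"]
  proof eventually_elim
    case (elim K)
    have K1: "1 \<le> K" and "t1 \<le> K" using elim t1 by linarith+
    have gK: "0 < g K" using g_pos K1 by simp
    have "g K < 1/2" using g_decr[of t1 K] t1 \<open>t1 \<le> K\<close> by simp
    have shift_ge_2: "2 \<le> width_shift K"
    proof -
      have "1 / g K \<le> maxdisc x K / g K"
        using one_le_maxdisc[OF K1] gK by (intro divide_right_mono) auto
      moreover have "2 \<le> 1 / g K" using gK \<open>g K < 1/2\<close> by (simp add: le_divide_eq)
      ultimately show ?thesis unfolding width_shift_def by simp
    qed
    have "real (block_end \<epsilon> K) - real K \<le> 2 * disc_error K / \<epsilon> + 2"
      unfolding block_end_def using disc_error_nonneg[OF K1] assms by (simp add: of_nat_nat) linarith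
    also have "\<dots> \<le> 2 * width_shift K / \<epsilon> + 2"
      using disc_error_le_width_shift[OF K1] assms by (simp add: divide_right_mono)
    also have "\<dots> \<le> (4 / \<epsilon> + 4) * (width_shift K / 2)"
      using assms shift_ge_2 by (simp add: field_simps)
    also have "\<dots> \<le> real r * (width_shift K - 1)"
      using r shift_ge_2 by (intro mult_mono) auto
    finally have "real (block_end \<epsilon> K) \<le> real K + real r * max 0 (width_shift K - 1)"
      using shift_ge_2 by simp
    then have "g (real K + real r * max 0 (width_shift K - 1)) \<le> g (block_end \<epsilon> K)"
      by (intro g_decr) (auto simp: block_end_def)
    moreover have "g K / (1 + \<epsilon>) < g (real K + real r * max 0 (width_shift K - 1))"
      using elim(1) gK assms by (simp add: field_simps)
    ultimately have "g K / (1 + \<epsilon>) \<le> g (block_end \<epsilon> K)" by simp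
    then show ?case using assms by (simp add: field_simps)
  qed
qed

lemma block_chain_exists:
  assumes "0 < \<epsilon>" "\<epsilon> \<le> 1"
  obtains K0 where "block_chain x g \<epsilon> K0 (block_end \<epsilon>)"
proof -
  have "eventually (\<lambda>K. 1 \<le> K \<and> g K \<le> (1 + \<epsilon>) * g (block_end \<epsilon> K) \<and> disc_error K \<le> \<epsilon> * real K / 2)
          sequentially"
    using eventually_ge_at_top[of "1::nat"] eventually_g_le_g_block_end[OF assms(1)]
      eventually_disc_error_le[OF assms(1)]
    by eventually_elim auto
  then obtain K0 where K0: "\<And>K. K0 \<le> K \<Longrightarrow>
      1 \<le> K \<and> g K \<le> (1 + \<epsilon>) * g (block_end \<epsilon> K) \<and> disc_error K \<le> \<epsilon> * real K / 2"
    unfolding eventually_sequentially by blast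
  have "disc_error K \<le> \<epsilon> * (real (block_end \<epsilon> K) - real K) / 2" for K
  proof -
    have "2 * disc_error K / \<epsilon> \<le> real (block_end \<epsilon> K) - real K"
      unfolding block_end_def by linarith
    then show ?thesis using assms by (simp add: field_simps)
  qed
  then have "block_chain x g \<epsilon> K0 (block_end \<epsilon>)"
    using K0[of K0] K0 assms
    by unfold_locales (auto simp: block_end_def g_pos g_decr)
  then show ?thesis by (rule that)
qed

lemma eventually_hfun_close:
  assumes s: "0 < s" and e: "0 < e"
  shows "eventually (\<lambda>N. \<forall>y. \<bar>hfun x g s N y - 2 * s\<bar> < e) sequentially"
proof -
  define \<epsilon> where "\<epsilon> = min 1 (e / (28 * s))"
  have eps: "0 < \<epsilon>" "\<epsilon> \<le> 1" unfolding \<epsilon>_def using s e by auto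
  have "14 * s * \<epsilon> \<le> 14 * s * (e / (28 * s))"
    unfolding \<epsilon>_def using s by (intro mult_left_mono) auto
  then have eps_e: "14 * s * \<epsilon> < e" using s e by simp
  obtain K0 where "block_chain x g \<epsilon> K0 (block_end \<epsilon>)"
    using block_chain_exists[OF eps] .
  then interpret chain: block_chain x g \<epsilon> K0 "block_end \<epsilon>" .
  obtain N0 where N0: "\<And>N w. N0 \<le> N \<Longrightarrow> \<bar>(\<Sum>n=1..N. wrapped_density n w) - real N\<bar> \<le> 7 * \<epsilon> * real N"
    using chain.sum_density_uniform_error by blast
  show ?thesis using eventually_ge_at_top[of "max N0 (max 1 (nat \<lceil>2 * s\<rceil>))"]
  proof eventually_elim
    case (elim N)
    then have "N0 \<le> N" "1 \<le> N" "2 * s \<le> real N" by linarith+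
    then have d: "0 \<le> s / real N" "s / real N \<le> 1/2" using s by (auto simp: field_simps)
    show ?case
    proof
      fix y
      have "\<bar>hfun x g s N y - 2 * (s / real N) * real N\<bar> \<le> 2 * (s / real N) * (7 * \<epsilon> * real N)"
        unfolding hfun_eq_integral[OF \<open>1 \<le> N\<close> s d(2)]
        by (rule integral_indicator_approx[OF d(1) integrable_indicator_sum_density N0[OF \<open>N0 \<le> N\<close>]])
      then show "\<bar>hfun x g s N y - 2 * s\<bar> < e"
        using \<open>1 \<le> N\<close> eps_e by (simp add: field_simps)
    qed
  qed
qed

end

theorem mainTheorem3:
  fixes x :: "nat \<Rightarrow> real" and g :: "real \<Rightarrow> real" and s :: real
  assumes g_pos: "\<And>t. t \<ge> 1 \<Longrightarrow> g t > 0"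
    and g_decr: "\<And>t u. 1 \<le> t \<Longrightarrow> t \<le> u \<Longrightarrow> g u \<le> g t"
    and g_disc: "filterlim (\<lambda>N. g (real N) / discrepancy x N) at_top sequentially"
    and g_Ng: "filterlim (\<lambda>N. real N * g (real N)) at_top sequentially"
    and g_ratio: "(\<lambda>N. g (real N * (1 + maxdisc x N / (real N * g (real N)))) / g (real N))
                    \<longlonglongrightarrow> 1"
    and s_pos: "s > 0"
  shows "uniform_limit UNIV (\<lambda>N y. hfun x g s N y) (\<lambda>y. 2 * s) sequentially"
proof -
  interpret admissible_width x g
    by unfold_locales (use g_pos g_decr g_disc g_ratio in auto)
  show ?thesis
  proof (rule uniform_limitI)
    fix e :: real assume "0 < e"
    show "\<forall>\<^sub>F N in sequentially. \<forall>y\<in>UNIV. dist (hfun x g s N y) (2 * s) < e"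
      using eventually_hfun_close[OF s_pos \<open>0 < e\<close>] by eventually_elim (simp add: dist_real_def)
  qed
qed

end
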